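(* Let $\ell_1,\dots,\ell_T$ be labels, $v_1,v_2>0$, and $1\le i\le j\le T$. Suppose the optimal solution of subproblem $(i,j)$ exists and is constant. Then (1) its constant value is $r_{i,j}$; and (2) for every index $k$ with $i\le k\le j$, both $r_{i,k}\ge r_{i,j}$ and $r_{k,j}\le r_{i,j}$.
   Context: A regular binary proper scoring rule (RBPSR) is a function $C_\rho:\{\theta_1,\theta_2\}\times[0,1]\to[0,\infty]$ given by $C_\rho(\theta_1,q)=\int_q^1\frac{\rho(\eta)}{\eta}\,d\eta$ and $C_\rho(\theta_2,q)=\int_0^q\frac{\rho(\eta)}{1-\eta}\,d\eta$, where $\rho$ is a probability distribution on $[0,1]$ (possibly containing Dirac point masses), and these integrals are finite except that $C_\rho(\theta_1,0)$ and $C_\rho(\theta_2,1)$ may equal $\infty$. Given labels $\ell_1,\dots,\ell_T\in\{\theta_1,\theta_2\}$ and weights $v_1,v_2>0$, write $w(\theta_1)=v_1$, $w(\theta_2)=v_2$. For $1\le i\le j\le T$, a solution of subproblem $(i,j)$ is any $p_{i,j}=(p_i,\dots,p_j)\in[0,1]^{j-i+1}$, feasible if $p_i\le\cdots\le p_j$, with objective $J_{i,j}(p_{i,j})=\sum_{t=i}^j w(\ell_t)C_\rho(\ell_t,p_t)$. The optimal solution of subproblem $(i,j)$ is a feasible solution minimizing $J_{i,j}$ among feasible solutions simultaneously for every RBPSR $C_\rho$; it is constant if $p_i=\cdots=p_j$. For $i\le j$, $r_{i,j}=\frac{v_1m_{i,j}}{v_1m_{i,j}+v_2n_{i,j}}$,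 where $m_{i,j},n_{i,j}$ are the numbers of $\theta_1$- and $\theta_2$-labels among $\ell_i,\dots,\ell_j$. *)

theory Defs
  imports "HOL-Probability.Probability"
begin

datatype label = Theta1 | Theta2

definition prob_dist_01 :: "real measure \<Rightarrow> bool" where
  "prob_dist_01 \<rho> \<longleftrightarrow> prob_space \<rho> \<and> sets \<rho> = sets borel \<and> emeasure \<rho> (- {0..1}) = 0"

text \<open>Integrand rho(eta)/eta is read as integration of 1/eta
  against the measure rho; 1/0 is read as infinity.  Convention for atoms at the
  endpoint: theta1 integrates over [q,1], theta2 over [0,q).\<close>
definition C :: "real measure \<Rightarrow> label \<Rightarrow> real \<Rightarrow> ennreal" where
  "C \<rho> l q = (case l of
      Theta1 \<Rightarrow> (\<integral>\<^sup>+ \<eta>. indicator {q..1} \<eta> * (if \<eta> = 0 then \<infinity> else ennreal (1 / \<eta>)) \<partial>\<rho>)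
    | Theta2 \<Rightarrow> (\<integral>\<^sup>+ \<eta>. indicator {0..<q} \<eta> * (if \<eta> = 1 then \<infinity> else ennreal (1 / (1 - \<eta>))) \<partial>\<rho>))"

definition RBPSR :: "real measure \<Rightarrow> bool" where
  "RBPSR \<rho> \<longleftrightarrow> prob_dist_01 \<rho> \<and>
     (\<forall>q\<in>{0..1}. (q \<noteq> 0 \<longrightarrow> C \<rho> Theta1 q < \<infinity>) \<and> (q \<noteq> 1 \<longrightarrow> C \<rho> Theta2 q < \<infinity>))"

definition wt :: "real \<Rightarrow> real \<Rightarrow> label \<Rightarrow> real" where
  "wt v1 v2 l = (case l of Theta1 \<Rightarrow> v1 | Theta2 \<Rightarrow> v2)"

definition J :: "real measure \<Rightarrow> (nat \<Rightarrow> label) \<Rightarrow> real \<Rightarrow> real \<Rightarrow> nat \<Rightarrow> nat \<Rightarrow> (nat \<Rightarrow> real) \<Rightarrow> ennreal" where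
  "J \<rho> lab v1 v2 i j p = (\<Sum>t=i..j. ennreal (wt v1 v2 (lab t)) * C \<rho> (lab t) (p t))"

definition solution :: "nat \<Rightarrow> nat \<Rightarrow> (nat \<Rightarrow> real) \<Rightarrow> bool" where
  "solution i j p \<longleftrightarrow> (\<forall>t\<in>{i..j}. 0 \<le> p t \<and> p t \<le> 1)"

definition feasible :: "nat \<Rightarrow> nat \<Rightarrow> (nat \<Rightarrow> real) \<Rightarrow> bool" where
  "feasible i j p \<longleftrightarrow> solution i j p \<and> (\<forall>s\<in>{i..j}. \<forall>t\<in>{i..j}. s \<le> t \<longrightarrow> p s \<le> p t)"

definition optimal :: "(nat \<Rightarrow> label) \<Rightarrow> real \<Rightarrow> real \<Rightarrow> nat \<Rightarrow> nat \<Rightarrow> (nat \<Rightarrow> real) \<Rightarrow> bool" where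
  "optimal lab v1 v2 i j p \<longleftrightarrow> feasible i j p \<and>
     (\<forall>\<rho>. RBPSR \<rho> \<longrightarrow> (\<forall>p'. feasible i j p' \<longrightarrow> J \<rho> lab v1 v2 i j p \<le> J \<rho> lab v1 v2 i j p'))"

definition constant_sol :: "nat \<Rightarrow> nat \<Rightarrow> (nat \<Rightarrow> real) \<Rightarrow> bool" where
  "constant_sol i j p \<longleftrightarrow> (\<forall>t\<in>{i..j}. p t = p i)"

definition cnt :: "(nat \<Rightarrow> label) \<Rightarrow> label \<Rightarrow> nat \<Rightarrow> nat \<Rightarrow> nat" where
  "cnt lab l i j = card {t\<in>{i..j}. lab t = l}"

definition r :: "(nat \<Rightarrow> label) \<Rightarrow> real \<Rightarrow> real \<Rightarrow> nat \<Rightarrow> nat \<Rightarrow> real" where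
  "r lab v1 v2 i j = v1 * real (cnt lab Theta1 i j) /
      (v1 * real (cnt lab Theta1 i j) + v2 * real (cnt lab Theta2 i j))"

end

theory Submission
  imports Defs
begin

text \<open>Optimality is tested against the point-mass rules \<open>\<delta>\<^sub>a\<close>, \<open>0 < a < 1\<close>. Under \<open>\<delta>\<^sub>a\<close> a
  \<open>\<theta>\<^sub>1\<close>-label forecast \<open>q\<close> costs \<open>v\<^sub>1/a\<close> if \<open>q \<le> a\<close> and nothing otherwise, a \<open>\<theta>\<^sub>2\<close>-label
  costs \<open>v\<^sub>2/(1-a)\<close> if \<open>q > a\<close> and nothing otherwise. So a block of labels forecast at a
  common level \<open>q\<close> costs \<open>v\<^sub>1 m/a\<close> or \<open>v\<^sub>2 n/(1-a)\<close> according to the side of \<open>a\<close> on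
  which \<open>q\<close> lies, and the first is cheaper exactly when \<open>a\<close> exceeds the block's rate
  \<open>v\<^sub>1 m/(v\<^sub>1 m + v\<^sub>2 n)\<close>. Hence if an optimal solution is constant \<open>c\<close> on a prefix whose rate
  is below \<open>c\<close>, choosing \<open>a\<close> in between shows that pushing the prefix down to 0 is
  strictly better; symmetrically for a suffix whose rate is above \<open>c\<close>, pushed up to 1.
  Taking the whole block as prefix and as suffix pins \<open>c\<close> to \<open>r i j\<close>.\<close>

definition dirac_loss :: "real \<Rightarrow> real \<Rightarrow> real \<Rightarrow> label \<Rightarrow> real \<Rightarrow> real" where
  "dirac_loss v1 v2 a l q = (case l of Theta1 \<Rightarrow> if q \<le> a then v1 / a else 0
                                      | Theta2 \<Rightarrow> if a < q then v2 / (1 - a) else 0)"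

lemma dirac_loss_nonneg:
  assumes "0 < a" "a < 1" "0 < v1" "0 < v2"
  shows "0 \<le> dirac_loss v1 v2 a l q"
  using assms by (auto simp: dirac_loss_def split: label.splits)

lemma C_return_Theta1:
  assumes "0 < a" "a < 1"
  shows "C (return borel a) Theta1 q = ennreal (if q \<le> a then 1 / a else 0)"
proof -
  have "C (return borel a) Theta1 q = indicator {q..1} a * (if a = 0 then \<infinity> else ennreal (1 / a))"
    unfolding C_def label.case by (rule nn_integral_return) (simp, measurable)
  then show ?thesis using assms by (auto simp: indicator_def)
qed

lemma C_return_Theta2:
  assumes "0 < a" "a < 1"
  shows "C (return borel a) Theta2 q = ennreal (if a < q then 1 / (1 - a) else 0)"
proof -
  have "C (return borel a) Theta2 q = indicator {0..<q} a * (if a = 1 then \<infinity> else ennreal (1 / (1 - a)))"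
    unfolding C_def label.case by (rule nn_integral_return) (simp, measurable)
  then show ?thesis using assms by (auto simp: indicator_def)
qed

lemma RBPSR_return:
  assumes "0 < a" "a < 1"
  shows "RBPSR (return borel a)"
  using assms unfolding RBPSR_def prob_dist_01_def
  by (auto simp: C_return_Theta1 C_return_Theta2 prob_space_return emeasure_return)

lemma J_return:
  assumes "0 < a" "a < 1" "0 < v1" "0 < v2"
  shows "J (return borel a) lab v1 v2 i j p = ennreal (\<Sum>t=i..j. dirac_loss v1 v2 a (lab t) (p t))"
proof -
  have "ennreal (wt v1 v2 (lab t)) * C (return borel a) (lab t) (p t)
          = ennreal (dirac_loss v1 v2 a (lab t) (p t))" for t
    using assms by (cases "lab t")
      (auto simp: C_return_Theta1 C_return_Theta2 wt_def dirac_loss_def ennreal_mult'[symmetric])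
  then show ?thesis
    unfolding J_def using dirac_loss_nonneg[OF assms] by (simp add: sum_ennreal)
qed

lemma optimal_dirac_loss_le:
  assumes "optimal lab v1 v2 i j p" "feasible i j p'" "0 < a" "a < 1" "0 < v1" "0 < v2"
  shows "(\<Sum>t=i..j. dirac_loss v1 v2 a (lab t) (p t)) \<le> (\<Sum>t=i..j. dirac_loss v1 v2 a (lab t) (p' t))"
proof -
  have "J (return borel a) lab v1 v2 i j p \<le> J (return borel a) lab v1 v2 i j p'"
    using assms(1,2) RBPSR_return[OF assms(3,4)] unfolding optimal_def by blast
  moreover have "0 \<le> (\<Sum>t=i..j. dirac_loss v1 v2 a (lab t) (p' t))"
    using dirac_loss_nonneg[OF assms(3-6)] by (simp add: sum_nonneg)
  ultimately show ?thesis
    using assms(3-6) by (simp add: J_return)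
qed

lemma optimal_dirac_loss_block_le:
  assumes "optimal lab v1 v2 i j p" "feasible i j p'" "0 < a" "a < 1" "0 < v1" "0 < v2"
    and "B \<subseteq> {i..j}" "\<forall>t\<in>{i..j} - B. p' t = p t"
  shows "(\<Sum>t\<in>B. dirac_loss v1 v2 a (lab t) (p t)) \<le> (\<Sum>t\<in>B. dirac_loss v1 v2 a (lab t) (p' t))"
proof -
  let ?L = "\<lambda>q t. dirac_loss v1 v2 a (lab t) (q t)"
  have split: "sum (?L q) {i..j} = sum (?L q) ({i..j} - B) + sum (?L q) B" for q
    using assms(7) by (simp add: sum.subset_diff)
  have "sum (?L p') ({i..j} - B) = sum (?L p) ({i..j} - B)"
    using assms(8) by (intro sum.cong) auto
  then show ?thesis
    using optimal_dirac_loss_le[OF assms(1-6)] unfolding split by simp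
qed

lemma sum_dirac_loss_const:
  "(\<Sum>t=x..y. dirac_loss v1 v2 a (lab t) q)
     = (if q \<le> a then v1 * real (cnt lab Theta1 x y) / a
        else v2 * real (cnt lab Theta2 x y) / (1 - a))"
proof -
  have "dirac_loss v1 v2 a (lab t) q =
          (if q \<le> a then (if lab t = Theta1 then v1 / a else 0)
           else (if lab t = Theta2 then v2 / (1 - a) else 0))" for t
    by (cases "lab t") (simp_all add: dirac_loss_def)
  then show ?thesis
    by (simp add: cnt_def sum.inter_filter[symmetric])
qed

lemma cnt_Theta1_add_cnt_Theta2: "cnt lab Theta1 i j + cnt lab Theta2 i j = Suc j - i"
proof -
  have "cnt lab Theta1 i j + cnt lab Theta2 i j
          = card ({t\<in>{i..j}. lab t = Theta1} \<union> {t\<in>{i..j}. lab t = Theta2})"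
    unfolding cnt_def by (rule card_Un_disjoint[symmetric]) auto
  also have "{t\<in>{i..j}. lab t = Theta1} \<union> {t\<in>{i..j}. lab t = Theta2} = {i..j}"
    using label.exhaust by blast
  finally show ?thesis by simp
qed

lemma r_denominator_pos:
  assumes "0 < v1" "0 < v2" "i \<le> j"
  shows "0 < v1 * real (cnt lab Theta1 i j) + v2 * real (cnt lab Theta2 i j)"
proof -
  have "0 < cnt lab Theta1 i j \<or> 0 < cnt lab Theta2 i j"
    using cnt_Theta1_add_cnt_Theta2[of lab i j] assms(3) by linarith
  then show ?thesis
  proof
    assume "0 < cnt lab Theta1 i j"
    then show ?thesis using assms(1,2) by (intro add_pos_nonneg) simp_all
  next
    assume "0 < cnt lab Theta2 i j"
    then show ?thesis using assms(1,2) by (intro add_nonneg_pos) simp_all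
  qed
qed

lemma r_nonneg: "0 < v1 \<Longrightarrow> 0 < v2 \<Longrightarrow> 0 \<le> r lab v1 v2 i j"
  by (simp add: r_def)

lemma r_le_1:
  assumes "0 < v1" "0 < v2"
  shows "r lab v1 v2 i j \<le> 1"
proof -
  let ?m = "v1 * real (cnt lab Theta1 i j)" and ?n = "v2 * real (cnt lab Theta2 i j)"
  have "0 \<le> ?m" "0 \<le> ?n"
    using assms by simp_all
  then have "?m / (?m + ?n) \<le> 1"
    by (cases "?m + ?n = 0") (simp_all add: divide_le_eq_1_pos)
  then show ?thesis
    by (simp add: r_def)
qed

lemma ratio_less_iff_less_rate:
  fixes x y a :: real
  assumes "0 \<le> x" "0 \<le> y" "0 < x + y" "0 < a" "a < 1"
  shows "x / a < y / (1 - a) \<longleftrightarrow> x / (x + y) < a"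
  using assms by (simp add: field_simps)

lemma ratio_less_iff_greater_rate:
  fixes x y a :: real
  assumes "0 \<le> x" "0 \<le> y" "0 < x + y" "0 < a" "a < 1"
  shows "y / (1 - a) < x / a \<longleftrightarrow> a < x / (x + y)"
  using assms by (simp add: field_simps)

lemma feasible_in_unit_interval:
  assumes "feasible i j p" "t \<in> {i..j}"
  shows "0 \<le> p t" "p t \<le> 1"
  using assms by (simp_all add: feasible_def solution_def)

lemma optimal_prefix_value_le_rate:
  assumes opt: "optimal lab v1 v2 i j p" and "0 < v1" "0 < v2"
    and k: "k \<in> {i..j}" and const: "\<forall>t\<in>{i..k}. p t = c"
  shows "c \<le> r lab v1 v2 i k"
proof (rule ccontr)
  let ?m = "v1 * real (cnt lab Theta1 i k)" and ?n = "v2 * real (cnt lab Theta2 i k)"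
  assume "\<not> c \<le> r lab v1 v2 i k"
  then have less: "r lab v1 v2 i k < c" by simp
  have feas: "feasible i j p" using opt by (simp add: optimal_def)
  have "c \<le> 1" using const feasible_in_unit_interval(2)[OF feas, of i] k by auto
  define a where "a = (c + r lab v1 v2 i k) / 2"
  have a: "0 < a" "a < 1" "a < c" "r lab v1 v2 i k < a"
    using less \<open>c \<le> 1\<close> r_nonneg[OF assms(2,3), of lab i k] unfolding a_def by auto
  define p' where "p' t = (if t \<le> k then 0 else p t)" for t
  have feas': "feasible i j p'"
    using feas unfolding feasible_def solution_def p'_def by auto
  have "(\<Sum>t=i..k. dirac_loss v1 v2 a (lab t) c) = (\<Sum>t=i..k. dirac_loss v1 v2 a (lab t) (p t))"
    using const by (intro sum.cong) auto
  also have "\<dots> \<le> (\<Sum>t=i..k. dirac_loss v1 v2 a (lab t) (p' t))"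
    using k by (intro optimal_dirac_loss_block_le[OF opt feas' a(1,2) assms(2,3)]) (auto simp: p'_def)
  also have "\<dots> = (\<Sum>t=i..k. dirac_loss v1 v2 a (lab t) 0)"
    by (intro sum.cong) (auto simp: p'_def)
  finally have "?n / (1 - a) \<le> ?m / a"
    using a by (simp add: sum_dirac_loss_const)
  moreover have "?m / a < ?n / (1 - a)"
  proof -
    have "?m / (?m + ?n) < a"
      using a(4) by (simp add: r_def)
    moreover have "0 < ?m + ?n"
      using r_denominator_pos[OF assms(2,3)] k by simp
    ultimately show ?thesis
      using ratio_less_iff_less_rate[of ?m ?n a] assms(2,3) a(1,2) by simp
  qed
  ultimately show False by simp
qed

lemma optimal_suffix_rate_le_value:
  assumes opt: "optimal lab v1 v2 i j p" and "0 < v1" "0 < v2"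
    and k: "k \<in> {i..j}" and const: "\<forall>t\<in>{k..j}. p t = c"
  shows "r lab v1 v2 k j \<le> c"
proof (rule ccontr)
  let ?m = "v1 * real (cnt lab Theta1 k j)" and ?n = "v2 * real (cnt lab Theta2 k j)"
  assume "\<not> r lab v1 v2 k j \<le> c"
  then have less: "c < r lab v1 v2 k j" by simp
  have feas: "feasible i j p" using opt by (simp add: optimal_def)
  have "0 \<le> c" using const feasible_in_unit_interval(1)[OF feas, of k] k by auto
  define a where "a = (c + r lab v1 v2 k j) / 2"
  have a: "0 < a" "a < 1" "c < a" "a < r lab v1 v2 k j"
    using less \<open>0 \<le> c\<close> r_le_1[OF assms(2,3), of lab k j] unfolding a_def by auto
  define p' where "p' t = (if k \<le> t then 1 else p t)" for t
  have feas': "feasible i j p'"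
    using feas unfolding feasible_def solution_def p'_def by auto
  have "(\<Sum>t=k..j. dirac_loss v1 v2 a (lab t) c) = (\<Sum>t=k..j. dirac_loss v1 v2 a (lab t) (p t))"
    using const by (intro sum.cong) auto
  also have "\<dots> \<le> (\<Sum>t=k..j. dirac_loss v1 v2 a (lab t) (p' t))"
    using k by (intro optimal_dirac_loss_block_le[OF opt feas' a(1,2) assms(2,3)]) (auto simp: p'_def)
  also have "\<dots> = (\<Sum>t=k..j. dirac_loss v1 v2 a (lab t) 1)"
    by (intro sum.cong) (auto simp: p'_def)
  finally have "?m / a \<le> ?n / (1 - a)"
    using a by (simp add: sum_dirac_loss_const)
  moreover have "?n / (1 - a) < ?m / a"
  proof -
    have "a < ?m / (?m + ?n)"
      using a(4) by (simp add: r_def)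
    moreover have "0 < ?m + ?n"
      using r_denominator_pos[OF assms(2,3)] k by simp
    ultimately show ?thesis
      using ratio_less_iff_greater_rate[of ?m ?n a] assms(2,3) a(1,2) by simp
  qed
  ultimately show False by simp
qed

theorem theorem4p7:
  fixes lab :: "nat \<Rightarrow> label" and v1 v2 :: real and T i j :: nat and p :: "nat \<Rightarrow> real"
  assumes "v1 > 0" and "v2 > 0"
    and "1 \<le> i" and "i \<le> j" and "j \<le> T"
    and "optimal lab v1 v2 i j p"
    and "constant_sol i j p"
  shows "(\<forall>t\<in>{i..j}. p t = r lab v1 v2 i j) \<and>
         (\<forall>k\<in>{i..j}. r lab v1 v2 i k \<ge> r lab v1 v2 i j \<and> r lab v1 v2 k j \<le> r lab v1 v2 i j)"
proof -
  obtain c where const: "\<forall>t\<in>{i..j}. p t = c"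
    using \<open>constant_sol i j p\<close> unfolding constant_sol_def by blast
  note prefix = optimal_prefix_value_le_rate[OF \<open>optimal lab v1 v2 i j p\<close> assms(1,2)]
  note suffix = optimal_suffix_rate_le_value[OF \<open>optimal lab v1 v2 i j p\<close> assms(1,2)]
  have "c \<le> r lab v1 v2 i j" "r lab v1 v2 i j \<le> c"
    using \<open>i \<le> j\<close> const by (intro prefix suffix; auto)+
  then have c_eq_rate: "c = r lab v1 v2 i j"
    by simp
  have "r lab v1 v2 i j \<le> r lab v1 v2 i k \<and> r lab v1 v2 k j \<le> r lab v1 v2 i j"
    if "k \<in> {i..j}" for k
  proof -
    have "c \<le> r lab v1 v2 i k" "r lab v1 v2 k j \<le> c"
      using that const by (intro prefix suffix; auto)+
    then show ?thesis
      by (simp add: c_eq_rate)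
  qed
  then show ?thesis
    using const c_eq_rate by simp
qed

end
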